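(* Let $0<a_1<a_2<\cdots<a_n$, $A_i:=a_1+\cdots+a_i$, $A_{i:j}:=\sum_{k=i}^ja_k$, and for a permutation $\pi$ of $\{1,\dots,n\}$, $A_{\pi(i)}:=a_{\pi(1)}+\cdots+a_{\pi(i)}$. Let $f$ be a positive differentiable function on $[0,\infty)$ with $0<\inf f\le\sup f<\infty$. (i) If $f$ is strictly decreasing on $[0,A_n]$, then $$\sum_{i=1}^n a_i\int_0^{A_i}f(s)\,ds<\sum_{i=1}^n a_{\pi(i)}\int_0^{A_{\pi(i)}}f(s)\,ds$$ for every permutation $\pi$ with $(\pi(1),\dots,\pi(n))\ne(1,2,\dots,n)$. (ii) If $f$ is strictly increasing on $[0,A_n]$, then $$\sum_{i=1}^n a_{n+1-i}\int_0^{A_{n+1-i:n}}f(s)\,ds<\sum_{i=1}^n a_{\pi(i)}\int_0^{A_{\pi(i)}}f(s)\,ds$$ for every permutation $\pi$ with $(\pi(1),\dots,\pi(n))\ne(n,n-1,\dots,1)$. *)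

theory Defs
  imports "HOL-Analysis.Analysis"
begin

end

theory Submission
  imports Defs
begin

text \<open>Read both sums as the cost of running jobs of lengths \<open>a\<^sub>i\<close> one after another, a job
  paying its length times \<open>F(completion time)\<close>, where \<open>F t = \<integral>\<^sub>0\<^sup>t f\<close>. Exchanging two adjacent jobs
  of lengths \<open>x < y\<close> that start at time \<open>P\<close> changes the cost by \<open>x y\<close> times the difference of the
  means of \<open>f\<close> over \<open>[P+x, P+x+y]\<close> and over its terminal piece \<open>[P+y, P+x+y]\<close>. Hence for strictly
  decreasing \<open>f\<close> the shorter job must go first, for strictly increasing \<open>f\<close> the longer one.
  Insertion sort by this rule strictly lowers the cost at every step that changes the order, so
  the sorted schedule is the unique minimiser.\<close>

lemma integral_tail_mean_less:
  fixes f :: "real \<Rightarrow> real"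
  assumes cont: "continuous_on {c..d} f" and dec: "strict_antimono_on {c..d} f"
    and "c < m" "m < d"
  shows "(d - c) * integral {m..d} f < (d - m) * integral {c..d} f"
proof -
  have cont_cm: "continuous_on {c..m} f" and cont_md: "continuous_on {m..d} f"
    using cont \<open>m < d\<close> \<open>c < m\<close> by (auto elim: continuous_on_subset)
  have "integral {m..d} f < integral {m..d} (\<lambda>_. f m)"
    using \<open>c < m\<close> \<open>m < d\<close>
    by (intro integral_less_real cont_md) (auto intro!: monotone_onD[OF dec])
  then have tail: "integral {m..d} f < (d - m) * f m"
    using \<open>m < d\<close> by simp
  have "integral {c..m} (\<lambda>_. f m) < integral {c..m} f"
    using \<open>c < m\<close> \<open>m < d\<close>
    by (intro integral_less_real cont_cm) (auto intro!: monotone_onD[OF dec])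
  then have head: "(m - c) * f m < integral {c..m} f"
    using \<open>c < m\<close> by simp
  have split: "integral {c..d} f = integral {c..m} f + integral {m..d} f"
    using Henstock_Kurzweil_Integration.integral_combine[where a=c and c=m and b=d and f=f]
      \<open>c < m\<close> \<open>m < d\<close> integrable_continuous_real[OF cont]
    by simp
  have "(d - c) * integral {m..d} f = (d - m) * integral {m..d} f + (m - c) * integral {m..d} f"
    by (simp add: algebra_simps)
  also have "\<dots> < (d - m) * integral {m..d} f + (m - c) * ((d - m) * f m)"
    using tail \<open>c < m\<close> by simp
  also have "\<dots> < (d - m) * integral {m..d} f + (d - m) * integral {c..m} f"
    using mult_strict_left_mono[OF head, of "d - m"] \<open>m < d\<close> by (simp add: mult_ac)
  finally show ?thesis
    by (simp add: split algebra_simps)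
qed

lemma strict_mono_on_atLeastAtMost_SucI:
  fixes a :: "nat \<Rightarrow> 'a::order"
  assumes "\<And>i. m \<le> i \<Longrightarrow> i < n \<Longrightarrow> a i < a (Suc i)"
  shows "strict_mono_on {m..n} a"
proof (rule strict_mono_onI)
  fix i j assume "i \<in> {m..n}" "j \<in> {m..n}" "i < j"
  then show "a i < a j"
  proof (induction j)
    case (Suc j)
    then have "a j < a (Suc j)"
      using assms by simp
    with Suc show ?case
      by (cases "i = j") (auto simp: less_Suc_eq)
  qed simp
qed

lemma sum_list_map_upt: "sum_list (map g [1..<Suc n]) = (\<Sum>k=1..n. g k)"
  using sum_set_upt_conv_sum_list_nat[of g 1 "Suc n"]
  by (simp add: atLeastLessThanSuc_atLeastAtMost del: upt_Suc)

lemma rev_map_upt: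
  "rev (map g [1..<Suc n]) = map (g \<circ> (\<lambda>i. n + 1 - i)) [1..<Suc n]"
  by (rule nth_equalityI) (simp_all add: rev_nth Suc_diff_Suc del: upt_Suc)

lemma mset_map_upt_permutes:
  assumes "\<pi> permutes {1..n}"
  shows "mset (map (a \<circ> \<pi>) [1..<Suc n]) = mset (map a [1..<Suc n])"
  using permutes_implies_image_mset_eq[OF assms, of "a \<circ> \<pi>" a]
  by (simp add: atLeastLessThanSuc_atLeastAtMost del: upt_Suc)

lemma map_upt_comp_neq:
  assumes "inj_on a {1..n}" "\<sigma> ` {1..n} \<subseteq> {1..n}" "\<pi> ` {1..n} \<subseteq> {1..n}"
    and "i \<in> {1..n}" "\<sigma> i \<noteq> \<pi> i"
  shows "map (a \<circ> \<sigma>) [1..<Suc n] \<noteq> map (a \<circ> \<pi>) [1..<Suc n]"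
proof
  assume "map (a \<circ> \<sigma>) [1..<Suc n] = map (a \<circ> \<pi>) [1..<Suc n]"
  moreover have "i \<in> set [1..<Suc n]"
    using \<open>i \<in> {1..n}\<close> by (simp del: upt_Suc)
  ultimately have "a (\<sigma> i) = a (\<pi> i)"
    by (simp del: upt_Suc)
  then show False
    using assms inj_onD[OF assms(1)] by blast
qed

lemma strict_mono_on_imp_sorted_wrt_map_upt:
  assumes "strict_mono_on {1..n} a"
  shows "sorted_wrt (<) (map a [1..<Suc n])"
  unfolding sorted_wrt_map
proof (rule sorted_wrt_mono_rel[OF _ sorted_wrt_upt])
  fix i j assume "i \<in> set [1..<Suc n]" "j \<in> set [1..<Suc n]" "i < j"
  then show "a i < a j"
    by (intro strict_mono_onD[OF assms]) auto
qed

fun completion_cost :: "(real \<Rightarrow> real) \<Rightarrow> real \<Rightarrow> real list \<Rightarrow> real" where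
  "completion_cost F P [] = 0"
| "completion_cost F P (y # ys) = y * F (P + y) + completion_cost F (P + y) ys"

lemma completion_cost_append:
  "completion_cost F P (xs @ ys) = completion_cost F P xs + completion_cost F (P + sum_list xs) ys"
  by (induction xs arbitrary: P) (simp_all add: add_ac)

lemma completion_cost_uminus:
  "completion_cost (\<lambda>t. - F t) P ys = - completion_cost F P ys"
  by (induction ys arbitrary: P) simp_all

lemma completion_cost_map_upt:
  "completion_cost F 0 (map g [1..<Suc n]) = (\<Sum>i=1..n. g i * F (\<Sum>k=1..i. g k))"
proof (induction n)
  case (Suc n)
  have "completion_cost F 0 (map g [1..<Suc (Suc n)])
      = completion_cost F 0 (map g [1..<Suc n]) + g (Suc n) * F (sum_list (map g [1..<Suc n]) + g (Suc n))"
    by (simp add: completion_cost_append)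
  then show ?case
    using Suc sum_list_map_upt[of g n] by (simp del: upt_Suc)
qed simp

lemma completion_cost_rev_map_upt:
  "completion_cost F 0 (rev (map g [1..<Suc n])) = (\<Sum>i=1..n. g (n + 1 - i) * F (\<Sum>k=n+1-i..n. g k))"
proof -
  have "completion_cost F 0 (rev (map g [1..<Suc n]))
      = (\<Sum>i=1..n. g (n + 1 - i) * F (\<Sum>k=1..i. g (n + 1 - k)))"
    by (simp only: rev_map_upt completion_cost_map_upt comp_apply)
  also have "\<dots> = (\<Sum>i=1..n. g (n + 1 - i) * F (\<Sum>k=n+1-i..n. g k))"
  proof (intro sum.cong refl)
    fix i assume "i \<in> {1..n}"
    then have "(\<Sum>k=1..i. g (n + 1 - k)) = (\<Sum>k=n+1-i..n. g k)"
      by (intro sum.reindex_bij_witness[of _ "\<lambda>k. n + 1 - k" "\<lambda>k. n + 1 - k"]) auto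
    then show "g (n + 1 - i) * F (\<Sum>k=1..i. g (n + 1 - k)) = g (n + 1 - i) * F (\<Sum>k=n+1-i..n. g k)"
      by simp
  qed
  finally show ?thesis .
qed

lemma completion_cost_exchange_antimono:
  fixes f :: "real \<Rightarrow> real"
  assumes cont: "continuous_on {0..T} f" and dec: "strict_antimono_on {0..T} f"
    and "0 \<le> P" "0 < x" "x < y" "P + x + y \<le> T"
  shows "completion_cost (\<lambda>t. integral {0..t} f) P [x, y]
       < completion_cost (\<lambda>t. integral {0..t} f) P [y, x]"
proof -
  have split: "integral {0..u} f = integral {0..v} f - integral {u..v} f"
    if "0 \<le> u" "u \<le> v" "v \<le> T" for u v
  proof -
    have "f integrable_on {0..v}"
      using continuous_on_subset[OF cont, of "{0..v}"] that by (simp add: integrable_continuous_real)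
    then show ?thesis
      using Henstock_Kurzweil_Integration.integral_combine[where a=0 and c=u and b=v and f=f] that by simp
  qed
  have sub: "{P+x..P+x+y} \<subseteq> {0..T}"
    using assms by auto
  have mean: "y * integral {P+y..P+x+y} f < x * integral {P+x..P+x+y} f"
    using integral_tail_mean_less[OF continuous_on_subset[OF cont sub] monotone_on_subset[OF dec sub],
        of "P+y"] assms
    by simp
  have Fx: "integral {0..P+x} f = integral {0..P+x+y} f - integral {P+x..P+x+y} f"
    and Fy: "integral {0..P+y} f = integral {0..P+x+y} f - integral {P+y..P+x+y} f"
    using assms by (auto intro!: split)
  show ?thesis
    unfolding completion_cost.simps Fx Fy using mean by (simp add: algebra_simps)
qed

lemma completion_cost_exchange_mono:
  fixes f :: "real \<Rightarrow> real"
  assumes cont: "continuous_on {0..T} f" and inc: "strict_mono_on {0..T} f"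
    and "0 \<le> P" "0 < y" "y < x" "P + x + y \<le> T"
  shows "completion_cost (\<lambda>t. integral {0..t} f) P [x, y]
       < completion_cost (\<lambda>t. integral {0..t} f) P [y, x]"
proof -
  have "strict_antimono_on {0..T} (\<lambda>s. - f s)"
    using inc by (auto simp: monotone_on_def)
  from completion_cost_exchange_antimono[OF continuous_on_minus[OF cont] this,
      where P=P and x=y and y=x] assms
  show ?thesis
    by (simp add: completion_cost_uminus add_ac)
qed

locale adjacent_exchange =
  fixes F :: "real \<Rightarrow> real" and T :: real and key :: "real \<Rightarrow> 'k::linorder"
  assumes exchange: "\<lbrakk>0 \<le> P; 0 < x; 0 < y; P + x + y \<le> T; key x < key y\<rbrakk>
    \<Longrightarrow> completion_cost F P [x, y] < completion_cost F P [y, x]"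
begin

lemma completion_cost_insort_key:
  assumes "0 \<le> P" "\<forall>z\<in>set (y # zs). 0 < z" "P + sum_list (y # zs) \<le> T"
  shows "insort_key key y zs = y # zs
    \<or> completion_cost F P (insort_key key y zs) < completion_cost F P (y # zs)"
  using assms
proof (induction zs arbitrary: P)
  case (Cons z zs)
  show ?case
  proof (cases "key y \<le> key z")
    case False
    have "0 \<le> sum_list zs"
      using Cons.prems(2) by (intro sum_list_nonneg) auto
    then have "completion_cost F (P + z) (insort_key key y zs) \<le> completion_cost F (P + z) (y # zs)"
      using Cons.IH[of "P + z"] Cons.prems by (auto simp: add_ac less_imp_le)
    moreover have "completion_cost F P [z, y] < completion_cost F P [y, z]"
      using exchange[of P z y] Cons.prems False \<open>0 \<le> sum_list zs\<close> by auto
    ultimately show ?thesis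
      using False by (simp add: add_ac)
  qed simp
qed simp

lemma completion_cost_sort_key:
  assumes "0 \<le> P" "\<forall>z\<in>set ys. 0 < z" "P + sum_list ys \<le> T"
  shows "sort_key key ys = ys \<or> completion_cost F P (sort_key key ys) < completion_cost F P ys"
  using assms
proof (induction ys arbitrary: P)
  case (Cons y ys)
  have "sort_key key ys = ys
    \<or> completion_cost F (P + y) (sort_key key ys) < completion_cost F (P + y) ys"
    using Cons.IH[of "P + y"] Cons.prems by (auto simp: add_ac)
  moreover have "insort_key key y (sort_key key ys) = y # sort_key key ys
    \<or> completion_cost F P (insort_key key y (sort_key key ys)) < completion_cost F P (y # sort_key key ys)"
    using completion_cost_insort_key[of P y "sort_key key ys"] Cons.prems
    by (simp add: sum_mset_sum_list[symmetric])
  ultimately show ?case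
    by auto
qed simp

lemma completion_cost_sorted_less:
  assumes sorted: "sorted_wrt (\<lambda>u v. key u < key v) zs" and "mset zs = mset ys" "zs \<noteq> ys"
    and "0 \<le> P" "\<forall>z\<in>set ys. 0 < z" "P + sum_list ys \<le> T"
  shows "completion_cost F P zs < completion_cost F P ys"
proof -
  have "inj_on key (set ys)"
    using sorted \<open>mset zs = mset ys\<close>
    by (metis distinct_map mset_eq_setD sorted_wrt_map strict_sorted_iff)
  then have "sort_key key ys = zs"
    using sorted \<open>mset zs = mset ys\<close>
    by (intro sort_key_inj_key_eq) (simp_all add: sorted_wrt_map sorted_wrt_mono_rel[OF _ sorted])
  then show ?thesis
    using completion_cost_sort_key assms by auto
qed

lemma completion_cost_permuted_greater:
  fixes a :: "nat \<Rightarrow> real"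
  assumes sorted: "sorted_wrt (\<lambda>u v. key u < key v) zs" and zs: "mset zs = mset (map a [1..<Suc n])"
    and \<pi>: "\<pi> permutes {1..n}" and "zs \<noteq> map (a \<circ> \<pi>) [1..<Suc n]"
    and pos: "\<And>i. i \<in> {1..n} \<Longrightarrow> 0 < a i" and "(\<Sum>k=1..n. a k) \<le> T"
  shows "completion_cost F 0 zs < (\<Sum>i=1..n. a (\<pi> i) * F (\<Sum>k=1..i. a (\<pi> k)))"
proof -
  let ?ys = "map (a \<circ> \<pi>) [1..<Suc n]"
  have mset_ys: "mset ?ys = mset (map a [1..<Suc n])"
    using mset_map_upt_permutes[OF \<pi>] .
  have "sum_list ?ys = (\<Sum>k=1..n. a k)"
    using mset_ys by (metis sum_mset_sum_list sum_list_map_upt)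
  moreover have "\<forall>z\<in>set ?ys. 0 < z"
    using pos permutes_in_image[OF \<pi>] by (auto simp del: upt_Suc)
  ultimately have "completion_cost F 0 zs < completion_cost F 0 ?ys"
    using completion_cost_sorted_less[OF sorted zs[folded mset_ys]] assms by simp
  then show ?thesis
    unfolding completion_cost_map_upt by simp
qed

end

lemma shortest_first_cost_less:
  fixes a :: "nat \<Rightarrow> real" and n :: nat and f :: "real \<Rightarrow> real"
  defines "T \<equiv> \<Sum>k=1..n. a k"
  assumes cont: "continuous_on {0..T} f" and dec: "strict_antimono_on {0..T} f"
    and a_mono: "strict_mono_on {1..n} a" and pos: "\<And>i. i \<in> {1..n} \<Longrightarrow> 0 < a i"
    and \<pi>: "\<pi> permutes {1..n}" and "i \<in> {1..n}" "\<pi> i \<noteq> i"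
  shows "(\<Sum>i=1..n. a i * integral {0..(\<Sum>k=1..i. a k)} f)
    < (\<Sum>i=1..n. a (\<pi> i) * integral {0..(\<Sum>k=1..i. a (\<pi> k))} f)"
proof -
  interpret adjacent_exchange "\<lambda>t. integral {0..t} f" T "\<lambda>x. x"
    using completion_cost_exchange_antimono[OF cont dec] by unfold_locales simp
  have "map (a \<circ> id) [1..<Suc n] \<noteq> map (a \<circ> \<pi>) [1..<Suc n]"
    using assms permutes_image[OF \<pi>] strict_mono_on_imp_inj_on[OF a_mono]
    by (intro map_upt_comp_neq) auto
  then have "completion_cost (\<lambda>t. integral {0..t} f) 0 (map a [1..<Suc n])
      < (\<Sum>i=1..n. a (\<pi> i) * integral {0..(\<Sum>k=1..i. a (\<pi> k))} f)"
    by (intro completion_cost_permuted_greater)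
      (use strict_mono_on_imp_sorted_wrt_map_upt[OF a_mono] \<pi> pos in \<open>simp_all add: T_def del: upt_Suc\<close>)
  then show ?thesis
    unfolding completion_cost_map_upt .
qed

lemma longest_first_cost_less:
  fixes a :: "nat \<Rightarrow> real" and n :: nat and f :: "real \<Rightarrow> real"
  defines "T \<equiv> \<Sum>k=1..n. a k"
  assumes cont: "continuous_on {0..T} f" and inc: "strict_mono_on {0..T} f"
    and a_mono: "strict_mono_on {1..n} a" and pos: "\<And>i. i \<in> {1..n} \<Longrightarrow> 0 < a i"
    and \<pi>: "\<pi> permutes {1..n}" and "i \<in> {1..n}" "\<pi> i \<noteq> n + 1 - i"
  shows "(\<Sum>i=1..n. a (n + 1 - i) * integral {0..(\<Sum>k=n+1-i..n. a k)} f)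
    < (\<Sum>i=1..n. a (\<pi> i) * integral {0..(\<Sum>k=1..i. a (\<pi> k))} f)"
proof -
  interpret adjacent_exchange "\<lambda>t. integral {0..t} f" T uminus
    using completion_cost_exchange_mono[OF cont inc] by unfold_locales simp
  have "rev (map a [1..<Suc n]) \<noteq> map (a \<circ> \<pi>) [1..<Suc n]"
    unfolding rev_map_upt using assms permutes_image[OF \<pi>] strict_mono_on_imp_inj_on[OF a_mono]
    by (intro map_upt_comp_neq) auto
  then have "completion_cost (\<lambda>t. integral {0..t} f) 0 (rev (map a [1..<Suc n]))
      < (\<Sum>i=1..n. a (\<pi> i) * integral {0..(\<Sum>k=1..i. a (\<pi> k))} f)"
    by (intro completion_cost_permuted_greater)
      (use strict_mono_on_imp_sorted_wrt_map_upt[OF a_mono] \<pi> pos in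
        \<open>simp_all add: T_def sorted_wrt_rev del: upt_Suc\<close>)
  then show ?thesis
    unfolding completion_cost_rev_map_upt .
qed

theorem lemma3:
  fixes a :: "nat \<Rightarrow> real" and n :: nat and f :: "real \<Rightarrow> real"
  assumes a_pos: "0 < a 1"
    and a_incr: "\<And>i. 1 \<le> i \<Longrightarrow> i < n \<Longrightarrow> a i < a (Suc i)"
    and f_pos: "\<And>x. 0 \<le> x \<Longrightarrow> 0 < f x"
    and f_diff: "\<And>x. 0 \<le> x \<Longrightarrow> f differentiable (at x within {0..})"
    and f_inf: "0 < Inf (f ` {0..})"
    and f_sup: "bdd_above (f ` {0..})"
  shows
    "(strict_antimono_on {0..(\<Sum>k=1..n. a k)} f \<longrightarrow>
        (\<forall>\<pi>. \<pi> permutes {1..n} \<and> (\<exists>i\<in>{1..n}. \<pi> i \<noteq> i) \<longrightarrow>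
           (\<Sum>i=1..n. a i * integral {0..(\<Sum>k=1..i. a k)} f)
             < (\<Sum>i=1..n. a (\<pi> i) * integral {0..(\<Sum>k=1..i. a (\<pi> k))} f)))
     \<and>
     (strict_mono_on {0..(\<Sum>k=1..n. a k)} f \<longrightarrow>
        (\<forall>\<pi>. \<pi> permutes {1..n} \<and> (\<exists>i\<in>{1..n}. \<pi> i \<noteq> n + 1 - i) \<longrightarrow>
           (\<Sum>i=1..n. a (n + 1 - i) * integral {0..(\<Sum>k=n+1-i..n. a k)} f)
             < (\<Sum>i=1..n. a (\<pi> i) * integral {0..(\<Sum>k=1..i. a (\<pi> k))} f)))"
proof -
  have "continuous_on {0..} f"
    using f_diff differentiable_imp_continuous_within continuous_on_eq_continuous_within by blast
  then have cont: "continuous_on {0..(\<Sum>k=1..n. a k)} f"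
    by (rule continuous_on_subset) auto
  have a_mono: "strict_mono_on {1..n} a"
    using a_incr by (rule strict_mono_on_atLeastAtMost_SucI)
  have pos: "0 < a i" if "i \<in> {1..n}" for i
    using a_pos strict_mono_on_leD[OF a_mono, of 1 i] that by force
  show ?thesis
    using shortest_first_cost_less[OF cont _ a_mono pos] longest_first_cost_less[OF cont _ a_mono pos]
    by blast
qed

end
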